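(* Let $c=(c_k)_{k\ge1}$ be a sequence of complex numbers. Then $$\|T_c\|\le \sup_{k\ge1}|c_k|+2\sup_{k\ge2}k|c_k-c_{k-1}|,$$ and $$\|T_c\|\ge \sup_{k\ge1}\bigl\{|c_k|^2+(k-1)|c_k-c_{k-1}|^2\bigr\}^{1/2}.$$
   Context: For a complex sequence $c=(c_k)_{k\ge1}$, $T_c$ is the infinite matrix indexed by $j,k\ge1$ with entries $(T_c)_{jk}=c_k$ if $j=k$, $(T_c)_{jk}=c_k-c_{k-1}$ if $j<k$, and $(T_c)_{jk}=0$ if $j>k$. $\|T_c\|$ denotes its operator norm on $\ell^2$ if it acts boundedly, and $\|T_c\|=\infty$ otherwise. *)

theory Defs
  imports "HOL-Analysis.Analysis"
begin

text \<open>Sequences and vectors are indexed by positive naturals; index 0 is ignored.\<close>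

definition l2 :: "(nat \<Rightarrow> complex) set" where
  "l2 = {x. (\<lambda>k. (cmod (x k))\<^sup>2) summable_on {1..}}"

definition l2norm :: "(nat \<Rightarrow> complex) \<Rightarrow> real" where
  "l2norm x = sqrt (\<Sum>\<^sub>\<infinity>k\<in>{1..}. (cmod (x k))\<^sup>2)"

definition Tmat :: "(nat \<Rightarrow> complex) \<Rightarrow> nat \<Rightarrow> nat \<Rightarrow> complex" where
  "Tmat c j k = (if j = k then c k else if j < k then c k - c (k - 1) else 0)"

definition Tapp :: "(nat \<Rightarrow> complex) \<Rightarrow> (nat \<Rightarrow> complex) \<Rightarrow> nat \<Rightarrow> complex" where
  "Tapp c x j = (\<Sum>\<^sub>\<infinity>k\<in>{1..}. Tmat c j k * x k)"

definition acts_boundedly :: "(nat \<Rightarrow> complex) \<Rightarrow> bool" where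
  "acts_boundedly c \<longleftrightarrow> (\<exists>M. \<forall>x\<in>l2.
      (\<forall>j\<ge>1. (\<lambda>k. Tmat c j k * x k) summable_on {1..}) \<and>
      Tapp c x \<in> l2 \<and> l2norm (Tapp c x) \<le> M * l2norm x)"

definition Tnorm :: "(nat \<Rightarrow> complex) \<Rightarrow> ennreal" where
  "Tnorm c = (if acts_boundedly c
      then (SUP x\<in>{x\<in>l2. l2norm x \<le> 1}. ennreal (l2norm (Tapp c x)))
      else top)"

end

theory Submission
  imports Defs
begin

text \<open>
  Let A = sup |c k| and B = sup k |c k - c (k - 1)|. Above the diagonal, column k of T is
  constant of modulus at most B / k, so |(T x) j| <= A |x j| + B y j, where
  y j = sum over k > j of |x k| / k. The map |x| \<mapsto> y (\<open>hardy_dual\<close>, the adjoint of Hardy's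
  averaging operator without its diagonal) has norm at most 2 on l2: this is the Schur test with
  weights k^(-1/2), i.e. Cauchy--Schwarz combined with the telescoping bounds
  sum over k > j of k^(-3/2) <= 2 j^(-1/2) and sum over j < k of j^(-1/2) <= 2 k^(1/2).
  For the lower bound, the image of the k-th unit vector is the k-th column, whose norm is
  sqrt (|c k|^2 + (k - 1) |c k - c (k - 1)|^2).
\<close>

lemma nonneg_summable_on_infsum_le:
  fixes f :: "'a \<Rightarrow> real"
  assumes "\<And>x. x \<in> A \<Longrightarrow> f x \<ge> 0"
    and "\<And>F. finite F \<Longrightarrow> F \<subseteq> A \<Longrightarrow> sum f F \<le> B"
  shows "f summable_on A" "infsum f A \<le> B"
proof -
  show summable: "f summable_on A"
    by (rule nonneg_bdd_above_summable_on) (use assms in \<open>auto intro!: bdd_aboveI2\<close>)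
  show "infsum f A \<le> B"
    using infsum_le_finite_sums[OF summable] assms(2) by blast
qed

lemma has_sum_sum:
  fixes f :: "'i \<Rightarrow> 'a \<Rightarrow> 'b::topological_comm_monoid_add"
  assumes "finite I" "\<And>i. i \<in> I \<Longrightarrow> (f i has_sum s i) A"
  shows "((\<lambda>x. \<Sum>i\<in>I. f i x) has_sum (\<Sum>i\<in>I. s i)) A"
  using assms by (induction I rule: finite_induct) (auto intro: has_sum_add)

lemma has_sum_single_point:
  fixes v :: "'a \<Rightarrow> 'b::topological_comm_monoid_add"
  assumes "j \<in> A"
  shows "((\<lambda>k. if k = j then v k else 0) has_sum v j) A"
  by (rule has_sum_finite_neutralI[of "{j}"]) (use assms in auto)

lemma le_enn2real_SUP:
  fixes f :: "'a \<Rightarrow> real"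
  assumes "(SUP i\<in>I. ennreal (f i)) \<noteq> top" and "i \<in> I"
  shows "f i \<le> enn2real (SUP i\<in>I. ennreal (f i))"
proof -
  obtain r where r: "r \<ge> 0" "(SUP i\<in>I. ennreal (f i)) = ennreal r"
    using assms(1) by (cases "SUP i\<in>I. ennreal (f i)") auto
  have "ennreal (f i) \<le> ennreal r"
    using SUP_upper[OF assms(2), of "\<lambda>i. ennreal (f i)"] r(2) by simp
  then show ?thesis
    using r by (simp add: ennreal_le_iff)
qed

lemma inverse_sqrt_le_sqrt_diff:
  fixes p :: real
  assumes "p \<ge> 0"
  shows "1 / sqrt (p + 1) \<le> 2 * sqrt (p + 1) - 2 * sqrt p"
proof -
  define a b where "a = sqrt p" and "b = sqrt (p + 1)"
  have "a \<ge> 0" "a < b" "b * b = a * a + 1"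
    using assms by (simp_all add: a_def b_def)
  then have "1 / b \<le> 2 / (a + b)" and "2 * b - 2 * a = 2 / (a + b)"
    by (simp_all add: field_simps)
  then show ?thesis
    by (simp add: a_def b_def)
qed

lemma inverse_sqrt_cube_le_inverse_sqrt_diff:
  fixes p :: real
  assumes "p > 0"
  shows "1 / ((p + 1) * sqrt (p + 1)) \<le> 2 / sqrt p - 2 / sqrt (p + 1)"
proof -
  define a b where "a = sqrt p" and "b = sqrt (p + 1)"
  have ab: "0 < a" "a < b" "b * b = p + 1"
    using assms by (simp_all add: a_def b_def)
  have "b * a * b \<le> (p + 1) * b"
    using ab by (simp flip: ab(3))
  then have "1 / ((p + 1) * b) \<le> 1 / (b * a * b)"
    using ab assms by (intro divide_left_mono) auto
  also have "\<dots> = (1 / b) / (a * b)"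
    by simp
  also have "\<dots> \<le> (2 * b - 2 * a) / (a * b)"
    using inverse_sqrt_le_sqrt_diff[of p] assms ab
    by (intro divide_right_mono) (simp_all add: a_def b_def)
  also have "\<dots> = 2 / a - 2 / b"
    using ab by (simp add: field_simps)
  finally show ?thesis
    by (simp add: a_def b_def)
qed

lemma sum_inverse_sqrt_le: "(\<Sum>j=1..n. 1 / sqrt (real j)) \<le> 2 * sqrt (real n)"
proof (induction n)
  case (Suc n)
  then show ?case
    using inverse_sqrt_le_sqrt_diff[of "real n"] by (simp add: add.commute)
qed simp

lemma sum_inverse_sqrt_cube_telescope:
  assumes "j > 0"
  shows "(\<Sum>k\<in>{j<..j+n}. 1 / (real k * sqrt (real k))) \<le> 2 / sqrt j - 2 / sqrt (j + n)"
proof (induction n)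
  case (Suc n)
  have "{j<..j + Suc n} = insert (Suc (j + n)) {j<..j + n}"
    by auto
  then show ?case
    using Suc inverse_sqrt_cube_le_inverse_sqrt_diff[of "real (j + n)"] assms
    by (simp add: add_ac)
qed simp

lemma sum_inverse_sqrt_cube_le:
  assumes "j > 0" "finite F" "F \<subseteq> {j<..}"
  shows "(\<Sum>k\<in>F. 1 / (real k * sqrt (real k))) \<le> 2 / sqrt j"
proof -
  have "F \<subseteq> {j<..j + Max F}"
    using assms by (force intro: trans_le_add2 Max_ge)
  then have "(\<Sum>k\<in>F. 1 / (real k * sqrt (real k)))
      \<le> (\<Sum>k\<in>{j<..j + Max F}. 1 / (real k * sqrt (real k)))"
    by (intro sum_mono2) auto
  also have "\<dots> \<le> 2 / sqrt j"
  proof -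
    have "0 \<le> 2 / sqrt (real (j + Max F))"
      by simp
    then show ?thesis
      using sum_inverse_sqrt_cube_telescope[OF assms(1), of "Max F"] by linarith
  qed
  finally show ?thesis .
qed

lemma sum_tail_weighted_square_le:
  fixes a :: "nat \<Rightarrow> real"
  assumes "j > 0" "finite F"
  shows "(\<Sum>k\<in>F. if j < k then a k / k else 0)\<^sup>2
    \<le> 2 / sqrt j * (\<Sum>k\<in>F. if j < k then (a k)\<^sup>2 / sqrt k else 0)"
proof -
  define G where "G = {k\<in>F. j < k}"
  have "(\<Sum>k\<in>G. a k / k)\<^sup>2
      = (\<Sum>k\<in>G. (1 / sqrt (k * sqrt k)) * (a k / sqrt (sqrt k)))\<^sup>2"
  proof (intro arg_cong[where f = "\<lambda>t. t\<^sup>2"] sum.cong refl)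
    fix k :: nat
    have "sqrt (k * sqrt k) * sqrt (sqrt k) = sqrt (k * (sqrt k * sqrt k))"
      by (simp only: real_sqrt_mult mult.assoc)
    also have "\<dots> = k"
      by (simp only: real_sqrt_mult_self) simp
    finally show "a k / k = (1 / sqrt (k * sqrt k)) * (a k / sqrt (sqrt k))"
      by (simp add: field_simps)
  qed
  also have "\<dots> \<le> (\<Sum>k\<in>G. (1 / sqrt (k * sqrt k))\<^sup>2) * (\<Sum>k\<in>G. (a k / sqrt (sqrt k))\<^sup>2)"
    by (rule Cauchy_Schwarz_ineq_sum)
  also have "\<dots> = (\<Sum>k\<in>G. 1 / (k * sqrt k)) * (\<Sum>k\<in>G. (a k)\<^sup>2 / sqrt k)"
    by (simp add: power_divide)
  also have "\<dots> \<le> 2 / sqrt j * (\<Sum>k\<in>G. (a k)\<^sup>2 / sqrt k)"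
    using assms by (intro mult_right_mono sum_inverse_sqrt_cube_le sum_nonneg) (auto simp: G_def)
  finally show ?thesis
    using assms(2) by (simp add: G_def sum.inter_filter)
qed

lemma summable_on_tail_weighted_square:
  fixes a :: "nat \<Rightarrow> real"
  assumes "(\<lambda>k. (a k)\<^sup>2) summable_on {1..}"
  shows "(\<lambda>k. if j < k then (a k)\<^sup>2 / sqrt k else 0) summable_on {1..}"
proof (rule summable_on_comparison_test[OF assms])
  fix k :: nat
  assume "k \<in> {1..}"
  then have "(a k)\<^sup>2 / sqrt k \<le> (a k)\<^sup>2"
    by (simp add: divide_le_eq mult_le_cancel_left1)
  then show "(if j < k then (a k)\<^sup>2 / sqrt k else 0) \<le> (a k)\<^sup>2"
    by simp
qed simp

definition hardy_dual :: "(nat \<Rightarrow> real) \<Rightarrow> nat \<Rightarrow> real" where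
  "hardy_dual a j = (\<Sum>\<^sub>\<infinity>k\<in>{1..}. if j < k then a k / k else 0)"

lemma hardy_dual_square_le:
  fixes a :: "nat \<Rightarrow> real"
  assumes nonneg: "\<And>k. a k \<ge> 0" and summable: "(\<lambda>k. (a k)\<^sup>2) summable_on {1..}"
    and "j > 0"
  shows "(\<lambda>k. if j < k then a k / k else 0) summable_on {1..}"
    and "(hardy_dual a j)\<^sup>2 \<le> 2 / sqrt j * (\<Sum>\<^sub>\<infinity>k\<in>{1..}. if j < k then (a k)\<^sup>2 / sqrt k else 0)"
proof -
  define W where "W = (\<Sum>\<^sub>\<infinity>k\<in>{1..}. if j < k then (a k)\<^sup>2 / sqrt k else 0)"
  have finite_le: "(\<Sum>k\<in>F. if j < k then a k / k else 0) \<le> sqrt (2 / sqrt j * W)"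
    if "finite F" "F \<subseteq> {1..}" for F
  proof (rule real_le_rsqrt)
    have "(\<Sum>k\<in>F. if j < k then (a k)\<^sup>2 / sqrt k else 0) \<le> W"
      unfolding W_def using that
      by (intro finite_sum_le_infsum summable_on_tail_weighted_square[OF summable]) auto
    then have "2 / sqrt j * (\<Sum>k\<in>F. if j < k then (a k)\<^sup>2 / sqrt k else 0) \<le> 2 / sqrt j * W"
      by (rule mult_left_mono) simp
    then show "(\<Sum>k\<in>F. if j < k then a k / k else 0)\<^sup>2 \<le> 2 / sqrt j * W"
      using sum_tail_weighted_square_le[OF \<open>j > 0\<close> \<open>finite F\<close>, of a] by linarith
  qed
  show "(\<lambda>k. if j < k then a k / k else 0) summable_on {1..}"
    by (rule nonneg_summable_on_infsum_le(1)) (use nonneg finite_le in auto)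
  have "hardy_dual a j \<le> sqrt (2 / sqrt j * W)"
    unfolding hardy_dual_def
    by (rule nonneg_summable_on_infsum_le(2)) (use nonneg finite_le in auto)
  moreover have "hardy_dual a j \<ge> 0"
    unfolding hardy_dual_def by (rule infsum_nonneg) (simp add: nonneg)
  moreover have "W \<ge> 0"
    unfolding W_def by (rule infsum_nonneg) simp
  ultimately have "(hardy_dual a j)\<^sup>2 \<le> (sqrt (2 / sqrt j * W))\<^sup>2"
    by (intro power_mono)
  also have "\<dots> = 2 / sqrt j * W"
    using \<open>W \<ge> 0\<close> by simp
  finally show "(hardy_dual a j)\<^sup>2 \<le> 2 / sqrt j * W" .
qed

lemma sum_hardy_dual_square_le:
  fixes a :: "nat \<Rightarrow> real"
  assumes nonneg: "\<And>k. a k \<ge> 0" and summable: "(\<lambda>k. (a k)\<^sup>2) summable_on {1..}"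
    and F: "finite F" "F \<subseteq> {1..}"
  shows "(\<Sum>j\<in>F. (hardy_dual a j)\<^sup>2) \<le> 4 * (\<Sum>\<^sub>\<infinity>k\<in>{1..}. (a k)\<^sup>2)"
proof -
  define W where "W j = (\<Sum>\<^sub>\<infinity>k\<in>{1..}. if j < k then (a k)\<^sup>2 / sqrt k else 0)" for j :: nat
  have W_has_sum: "((\<lambda>k. 2 / sqrt j * (if j < k then (a k)\<^sup>2 / sqrt k else 0))
      has_sum (2 / sqrt j * W j)) {1..}" for j :: nat
    unfolding W_def
    by (intro has_sum_cmult_right has_sum_infsum summable_on_tail_weighted_square[OF summable])
  have "(\<Sum>j\<in>F. (hardy_dual a j)\<^sup>2) \<le> (\<Sum>j\<in>F. 2 / sqrt j * W j)"
    unfolding W_def using F by (intro sum_mono hardy_dual_square_le(2)[OF nonneg summable]) auto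
  also have "\<dots> \<le> 4 * (\<Sum>\<^sub>\<infinity>k\<in>{1..}. (a k)\<^sup>2)"
  proof (rule has_sum_mono[OF has_sum_sum[OF F(1) W_has_sum]
        has_sum_cmult_right[OF has_sum_infsum[OF summable]]])
    fix k :: nat
    assume "k \<in> {1..}"
    have "(\<Sum>j\<in>F. if j < k then 1 / sqrt j else 0) = (\<Sum>j\<in>{j\<in>F. j < k}. 1 / sqrt j)"
      using F(1) by (simp add: sum.inter_filter)
    also have "\<dots> \<le> (\<Sum>j=1..k-1. 1 / sqrt j)"
      using F by (intro sum_mono2) auto
    also have "\<dots> \<le> 2 * sqrt k"
      using sum_inverse_sqrt_le[of "k - 1"] by (simp add: order_trans)
    finally have weights: "(\<Sum>j\<in>F. if j < k then 1 / sqrt j else 0) \<le> 2 * sqrt k" .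
    have "(\<Sum>j\<in>F. 2 / sqrt j * (if j < k then (a k)\<^sup>2 / sqrt k else 0))
        = 2 * ((a k)\<^sup>2 / sqrt k) * (\<Sum>j\<in>F. if j < k then 1 / sqrt j else 0)"
      unfolding sum_distrib_left by (intro sum.cong) auto
    also have "\<dots> \<le> 2 * ((a k)\<^sup>2 / sqrt k) * (2 * sqrt k)"
      using weights by (rule mult_left_mono) simp
    also have "\<dots> = 4 * (a k)\<^sup>2"
      using \<open>k \<in> {1..}\<close> by simp
    finally show "(\<Sum>j\<in>F. 2 / sqrt j * (if j < k then (a k)\<^sup>2 / sqrt k else 0)) \<le> 4 * (a k)\<^sup>2" .
  qed
  finally show ?thesis .
qed

lemma Tapp_row_bound:
  fixes c x :: "nat \<Rightarrow> complex"
  assumes A: "\<And>k. k \<ge> 1 \<Longrightarrow> cmod (c k) \<le> A"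
    and B: "\<And>k. k \<ge> 2 \<Longrightarrow> real k * cmod (c k - c (k - 1)) \<le> B"
    and x: "x \<in> l2" and j: "j \<ge> 1"
  shows "(\<lambda>k. Tmat c j k * x k) summable_on {1..}"
    and "cmod (Tapp c x j) \<le> A * cmod (x j) + B * hardy_dual (\<lambda>k. cmod (x k)) j"
proof -
  define a where "a = (\<lambda>k. cmod (x k))"
  define h where "h k = (if k = j then A * a k else 0) + B * (if j < k then a k / k else 0)" for k
  have tail_summable: "(\<lambda>k. if j < k then a k / k else 0) summable_on {1..}"
    using x j by (intro hardy_dual_square_le(1)) (auto simp: a_def l2_def)
  have h_has_sum: "(h has_sum (A * a j + B * hardy_dual a j)) {1..}"
    unfolding h_def hardy_dual_def using j
    by (intro has_sum_add has_sum_single_point has_sum_cmult_right has_sum_infsum tail_summable) simp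
  have dominated: "norm (Tmat c j k * x k) \<le> h k" if "k \<in> {1..}" for k
  proof -
    consider "k = j" | "j < k" | "k < j"
      by linarith
    then show ?thesis
    proof cases
      case 1
      have "cmod (c j) * a j \<le> A * a j"
        using A[of j] j by (intro mult_right_mono) (simp_all add: a_def)
      then show ?thesis
        using 1 by (simp add: h_def Tmat_def norm_mult a_def)
    next
      case 2
      then have "real k * cmod (c k - c (k - 1)) \<le> B" "real k > 0"
        using B[of k] j by simp_all
      then have "cmod (c k - c (k - 1)) \<le> B / k"
        by (simp add: pos_le_divide_eq mult.commute)
      then have "cmod (c k - c (k - 1)) * a k \<le> B / k * a k"
        by (rule mult_right_mono) (simp add: a_def)
      moreover have "norm (Tmat c j k * x k) = cmod (c k - c (k - 1)) * a k"
        using 2 by (simp add: Tmat_def norm_mult a_def)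
      moreover have "h k = B / k * a k"
        using 2 by (simp add: h_def)
      ultimately show ?thesis
        by (simp only:)
    next
      case 3
      then show ?thesis
        by (simp add: h_def Tmat_def)
    qed
  qed
  have norm_summable: "(\<lambda>k. norm (Tmat c j k * x k)) summable_on {1..}"
    by (rule summable_on_comparison_test[OF has_sum_imp_summable[OF h_has_sum] dominated norm_ge_zero])
  then show "(\<lambda>k. Tmat c j k * x k) summable_on {1..}"
    by (rule abs_summable_summable)
  have "cmod (Tapp c x j) \<le> (\<Sum>\<^sub>\<infinity>k\<in>{1..}. norm (Tmat c j k * x k))"
    unfolding Tapp_def by (rule norm_infsum_bound[OF norm_summable])
  also have "\<dots> \<le> A * a j + B * hardy_dual a j"
    by (rule has_sum_mono[OF has_sum_infsum[OF norm_summable] h_has_sum dominated])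
  finally show "cmod (Tapp c x j) \<le> A * cmod (x j) + B * hardy_dual (\<lambda>k. cmod (x k)) j"
    by (simp only: a_def)
qed

lemma Tapp_l2_bound:
  fixes c x :: "nat \<Rightarrow> complex"
  assumes A: "\<And>k. k \<ge> 1 \<Longrightarrow> cmod (c k) \<le> A"
    and B: "\<And>k. k \<ge> 2 \<Longrightarrow> real k * cmod (c k - c (k - 1)) \<le> B"
    and x: "x \<in> l2"
  shows "Tapp c x \<in> l2" and "l2norm (Tapp c x) \<le> (A + 2 * B) * l2norm x"
proof -
  define a where "a = (\<lambda>k. cmod (x k))"
  define y where "y = hardy_dual a"
  define S where "S = (\<Sum>\<^sub>\<infinity>k\<in>{1..}. (a k)\<^sup>2)"
  have a_summable: "(\<lambda>k. (a k)\<^sup>2) summable_on {1..}"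
    using x by (simp add: l2_def a_def)
  have S_nonneg: "S \<ge> 0"
    unfolding S_def by (rule infsum_nonneg) simp
  have A_nonneg: "A \<ge> 0"
    by (rule order_trans[OF _ A[of 1]]) simp_all
  have B_nonneg: "B \<ge> 0"
    by (rule order_trans[OF _ B[of 2]]) simp_all
  have y_nonneg: "y j \<ge> 0" for j
    unfolding y_def hardy_dual_def by (rule infsum_nonneg) (simp add: a_def)
  have finite_le: "(\<Sum>j\<in>F. (cmod (Tapp c x j))\<^sup>2) \<le> ((A + 2 * B) * sqrt S)\<^sup>2"
    if F: "finite F" "F \<subseteq> {1..}" for F
  proof -
    have "(\<Sum>j\<in>F. (cmod (Tapp c x j))\<^sup>2) \<le> (\<Sum>j\<in>F. (A * a j + B * y j)\<^sup>2)"
      using F Tapp_row_bound(2)[OF A B x] by (intro sum_mono power_mono) (auto simp: a_def y_def)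
    also have "\<dots> = (L2_set (\<lambda>j. A * a j + B * y j) F)\<^sup>2"
      unfolding L2_set_def by (simp add: sum_nonneg)
    also have "\<dots> \<le> (L2_set (\<lambda>j. A * a j) F + L2_set (\<lambda>j. B * y j) F)\<^sup>2"
      by (intro power_mono L2_set_triangle_ineq) auto
    also have "\<dots> \<le> (A * sqrt S + B * (2 * sqrt S))\<^sup>2"
    proof (intro power_mono add_mono)
      have "(\<Sum>j\<in>F. (a j)\<^sup>2) \<le> S"
        unfolding S_def using F by (intro finite_sum_le_infsum a_summable) auto
      then have "L2_set a F \<le> sqrt S"
        unfolding L2_set_def by simp
      then show "L2_set (\<lambda>j. A * a j) F \<le> A * sqrt S"
        using A_nonneg by (simp add: L2_set_right_distrib[symmetric] mult_left_mono)
      have "(\<Sum>j\<in>F. (y j)\<^sup>2) \<le> 4 * S"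
        unfolding S_def y_def by (rule sum_hardy_dual_square_le[OF _ a_summable F]) (simp add: a_def)
      then have "L2_set y F \<le> sqrt (4 * S)"
        unfolding L2_set_def by simp
      then show "L2_set (\<lambda>j. B * y j) F \<le> B * (2 * sqrt S)"
        using B_nonneg by (simp add: real_sqrt_mult L2_set_right_distrib[symmetric] mult_left_mono)
    qed (auto intro: add_nonneg_nonneg)
    also have "\<dots> = ((A + 2 * B) * sqrt S)\<^sup>2"
      by (simp add: algebra_simps)
    finally show ?thesis .
  qed
  have "(\<lambda>j. (cmod (Tapp c x j))\<^sup>2) summable_on {1..}"
    and sum_le: "(\<Sum>\<^sub>\<infinity>j\<in>{1..}. (cmod (Tapp c x j))\<^sup>2) \<le> ((A + 2 * B) * sqrt S)\<^sup>2"
    by (rule nonneg_summable_on_infsum_le[OF _ finite_le], simp_all)+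
  then show "Tapp c x \<in> l2"
    by (simp add: l2_def)
  have "l2norm (Tapp c x) \<le> sqrt (((A + 2 * B) * sqrt S)\<^sup>2)"
    unfolding l2norm_def using sum_le by (rule real_sqrt_le_mono)
  also have "\<dots> = (A + 2 * B) * sqrt S"
    using A_nonneg B_nonneg S_nonneg by simp
  also have "sqrt S = l2norm x"
    by (simp add: l2norm_def S_def a_def)
  finally show "l2norm (Tapp c x) \<le> (A + 2 * B) * l2norm x" .
qed

lemma Tnorm_le:
  fixes c :: "nat \<Rightarrow> complex"
  assumes A: "\<And>k. k \<ge> 1 \<Longrightarrow> cmod (c k) \<le> A"
    and B: "\<And>k. k \<ge> 2 \<Longrightarrow> real k * cmod (c k - c (k - 1)) \<le> B"
  shows "Tnorm c \<le> ennreal (A + 2 * B)"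
proof -
  have "acts_boundedly c"
    unfolding acts_boundedly_def using Tapp_row_bound(1)[OF A B] Tapp_l2_bound[OF A B] by blast
  moreover have "l2norm (Tapp c x) \<le> A + 2 * B" if "x \<in> l2" "l2norm x \<le> 1" for x
  proof -
    have "A + 2 * B \<ge> 0"
      using order_trans[OF _ A[of 1]] order_trans[OF _ B[of 2]] by simp
    with \<open>l2norm x \<le> 1\<close> have "(A + 2 * B) * l2norm x \<le> A + 2 * B"
      by (rule mult_left_le)
    then show ?thesis
      using Tapp_l2_bound(2)[OF A B \<open>x \<in> l2\<close>] by linarith
  qed
  ultimately show ?thesis
    unfolding Tnorm_def by (auto intro!: SUP_least ennreal_leI)
qed

lemma Tnorm_ge_column_norm:
  fixes c :: "nat \<Rightarrow> complex"
  assumes "k \<ge> 1"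
  shows "ennreal (sqrt ((cmod (c k))\<^sup>2 + real (k - 1) * (cmod (c k - c (k - 1)))\<^sup>2)) \<le> Tnorm c"
proof (cases "acts_boundedly c")
  case True
  define e where "e i = (if i = k then (1::complex) else 0)" for i :: nat
  have e_square: "(\<lambda>i. (cmod (e i))\<^sup>2) = (\<lambda>i. if i = k then 1 else 0)"
    by (auto simp: e_def fun_eq_iff)
  have "e \<in> l2" "l2norm e = 1"
    using has_sum_single_point[of k "{1..}" "\<lambda>_. 1::real"] assms
    by (simp_all add: l2_def l2norm_def e_square has_sum_iff)
  have Te: "Tapp c e j = Tmat c j k" for j
    using has_sum_single_point[of k "{1..}" "Tmat c j"] assms
    by (simp add: Tapp_def e_def has_sum_iff if_distrib cong: if_cong)
  have "((\<lambda>j. (cmod (Tmat c j k))\<^sup>2) has_sum (\<Sum>j=1..k. (cmod (Tmat c j k))\<^sup>2)) {1..}"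
    by (rule has_sum_finite_neutralI) (auto simp: Tmat_def)
  moreover have "(\<Sum>j=1..k. (cmod (Tmat c j k))\<^sup>2)
      = (cmod (c k))\<^sup>2 + real (k - 1) * (cmod (c k - c (k - 1)))\<^sup>2"
  proof -
    have "{1..k} = insert k {1..<k}"
      using assms by auto
    then show ?thesis
      by (simp add: Tmat_def)
  qed
  ultimately have "l2norm (Tapp c e) = sqrt ((cmod (c k))\<^sup>2 + real (k - 1) * (cmod (c k - c (k - 1)))\<^sup>2)"
    by (simp add: l2norm_def Te has_sum_iff)
  then show ?thesis
    using True \<open>e \<in> l2\<close> \<open>l2norm e = 1\<close> unfolding Tnorm_def by (auto intro: SUP_upper2)
qed (simp add: Tnorm_def)

theorem theorem2:
  fixes c :: "nat \<Rightarrow> complex"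
  shows "Tnorm c \<le> (SUP k\<in>{1..}. ennreal (cmod (c k)))
            + 2 * (SUP k\<in>{2..}. ennreal (real k * cmod (c k - c (k - 1)))) \<and>
         Tnorm c \<ge> (SUP k\<in>{1..}. ennreal (sqrt ((cmod (c k))\<^sup>2
            + real (k - 1) * (cmod (c k - c (k - 1)))\<^sup>2)))"
proof
  define R1 where "R1 = (SUP k\<in>{1..}. ennreal (cmod (c k)))"
  define R2 where "R2 = (SUP k\<in>{2..}. ennreal (real k * cmod (c k - c (k - 1))))"
  show "Tnorm c \<le> R1 + 2 * R2"
  proof (cases "R1 = top \<or> R2 = top")
    case True
    then show ?thesis
      by (auto simp: ennreal_mult_top)
  next
    case False
    then have "Tnorm c \<le> ennreal (enn2real R1 + 2 * enn2real R2)"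
      unfolding R1_def R2_def by (intro Tnorm_le le_enn2real_SUP) auto
    also have "\<dots> = R1 + 2 * R2"
      using False by (simp add: ennreal_plus ennreal_mult top.not_eq_extremum)
    finally show ?thesis .
  qed
next
  show "(SUP k\<in>{1..}. ennreal (sqrt ((cmod (c k))\<^sup>2
      + real (k - 1) * (cmod (c k - c (k - 1)))\<^sup>2))) \<le> Tnorm c"
    by (rule SUP_least) (rule Tnorm_ge_column_norm, simp)
qed

end
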